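(* Let $G$ be the final graph of the uncoordinated construction (described in the context) on a finite point set $P\subset\mathbb{R}^d$ with parameter $s>1$, with each edge weighted by its Euclidean length. Then $G$ is a spanner with stretch factor $(s+1)/(s-1)$: for all $p,q\in P$, the shortest path length between $p$ and $q$ in $G$ is at most $\frac{s+1}{s-1}|pq|$.
   Context: Fix $d\ge 1$. Let $P\subset\mathbb{R}^d$ be a finite set of $n\ge 2$ points, $|xy|$ the Euclidean distance, $s>1$. Uncoordinated construction: start with the graph $G$ on vertex set $P$ with no edges. Every ordered pair $(p,q)$ of distinct points of $P$ is processed exactly once, in an arbitrary order, one at a time. When $(p,q)$ is processed, the edge $pq$ is added to $G$ unless $G$ currently contains an edge whose endpoints can be labeled $p',q'$ with $|pp'|\le |p'q'|/(2s+2)$ and $|qq'|\le |p'q'|/(2s+2)$. $G$ is the graph after all pairs are processed. (Equivalently, $G$ consists of the edges $pq$ for the pairs $(p,q)$ selected by the greedy $s$-WSPD algorithm: repeatedly choose an arbitrary pair of points not yet covered, add $(B_r(p),B_r(q))$ with $r=|pq|/(2s+2)$ and $B_r(x)=\{y\in P:|xy|\le r\}$, and mark all pairs $(x,y)$ with $x\in B_r(p)$, $y\in B_r(q)$ as covered.) *)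

theory Defs
  imports "HOL-Analysis.Analysis"
begin

text \<open>An edge is stored as an ordered pair; the graph is undirected.
  The test "G contains an edge whose endpoints can be labeled p', q' with
  |pp'| <= |p'q'|/(2s+2) and |qq'| <= |p'q'|/(2s+2)".\<close>
definition covered :: "real \<Rightarrow> ('a::euclidean_space \<times> 'a) set \<Rightarrow> 'a \<Rightarrow> 'a \<Rightarrow> bool" where
  "covered s E p q \<longleftrightarrow>
     (\<exists>(a, b) \<in> E.
        (dist p a \<le> dist a b / (2 * s + 2) \<and> dist q b \<le> dist a b / (2 * s + 2)) \<or>
        (dist p b \<le> dist a b / (2 * s + 2) \<and> dist q a \<le> dist a b / (2 * s + 2)))"

definition process_pair :: "real \<Rightarrow> ('a::euclidean_space \<times> 'a) set \<Rightarrow> 'a \<times> 'a \<Rightarrow> ('a \<times> 'a) set" where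
  "process_pair s E pq = (if covered s E (fst pq) (snd pq) then E else insert pq E)"

definition uncoord_graph :: "real \<Rightarrow> ('a::euclidean_space \<times> 'a) list \<Rightarrow> ('a \<times> 'a) set" where
  "uncoord_graph s ord_list = foldl (process_pair s) {} ord_list"

definition adjacent :: "('a \<times> 'a) set \<Rightarrow> 'a \<Rightarrow> 'a \<Rightarrow> bool" where
  "adjacent E x y \<longleftrightarrow> (x, y) \<in> E \<or> (y, x) \<in> E"

definition is_path :: "('a \<times> 'a) set \<Rightarrow> 'a list \<Rightarrow> 'a \<Rightarrow> 'a \<Rightarrow> bool" where
  "is_path E xs p q \<longleftrightarrow> xs \<noteq> [] \<and> hd xs = p \<and> last xs = q \<and>
     (\<forall>i < length xs - 1. adjacent E (xs ! i) (xs ! Suc i))"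

definition path_length :: "'a::metric_space list \<Rightarrow> real" where
  "path_length xs = (\<Sum>i < length xs - 1. dist (xs ! i) (xs ! Suc i))"

definition graph_dist :: "('a::metric_space \<times> 'a) set \<Rightarrow> 'a \<Rightarrow> 'a \<Rightarrow> real" where
  "graph_dist E p q = Inf (path_length ` {xs. is_path E xs p q})"

end

theory Submission
  imports Defs
begin

text \<open>Every pair pq of distinct points ends up covered by an edge ab of G with |pa|, |qb| \<le> |ab|/(2s+2).
  Induct over the pairs ordered by distance, with t = (s+1)/(s-1): the triangle inequality
  |ab| \<le> |pa| + |pq| + |qb| gives s|ab| \<le> (s+1)|pq|, so pa and bq are shorter than pq and are
  joined by paths of length at most t|pa| and t|bq|. Closing with the edge ab costs at most
  t|pa| + |ab| + t|qb| \<le> s|ab|/(s-1) \<le> t|pq|.\<close>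

lemma path_length_singleton [simp]: "path_length [x] = 0"
  by (simp add: path_length_def)

lemma path_length_Cons2: "path_length (x # y # zs) = dist x y + path_length (y # zs)"
  unfolding path_length_def
  by (simp add: sum.lessThan_Suc_shift del: sum.lessThan_Suc)

lemma path_length_nonneg: "path_length xs \<ge> 0"
  unfolding path_length_def by (simp add: sum_nonneg)

lemma path_length_append:
  "xs \<noteq> [] \<Longrightarrow> ys \<noteq> [] \<Longrightarrow>
   path_length (xs @ ys) = path_length xs + dist (last xs) (hd ys) + path_length ys"
proof (induction xs rule: list_nonempty_induct)
  case (single x)
  then show ?case by (cases ys) (simp_all add: path_length_Cons2)
next
  case (cons x xs)
  then show ?case by (cases xs) (simp_all add: path_length_Cons2)
qed

lemma is_path_singleton [simp]: "is_path E [x] p q \<longleftrightarrow> x = p \<and> x = q"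
  by (auto simp: is_path_def)

lemma is_path_Cons2:
  "is_path E (x # y # zs) p q \<longleftrightarrow> x = p \<and> adjacent E x y \<and> is_path E (y # zs) y q"
  unfolding is_path_def
  by (auto simp: less_Suc_eq_0_disj nth_Cons split: nat.splits)

lemma is_path_append_edge:
  assumes "is_path E xs p a" and "adjacent E a b" and "is_path E ys b q"
  shows "is_path E (xs @ ys) p q"
proof -
  have "xs \<noteq> []" using assms(1) by (simp add: is_path_def)
  then show ?thesis using assms
  proof (induction xs arbitrary: p rule: list_nonempty_induct)
    case (single x)
    then obtain ys' where "ys = b # ys'" by (cases ys) (auto simp: is_path_def)
    then show ?case using single by (auto simp: is_path_Cons2)
  next
    case (cons x xs)
    then show ?case by (cases xs) (auto simp: is_path_Cons2)
  qed
qed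

lemma graph_dist_le_path_length:
  "is_path E xs p q \<Longrightarrow> graph_dist E p q \<le> path_length xs"
  unfolding graph_dist_def
  by (rule cInf_lower) (auto intro: bdd_belowI[of _ 0] simp: path_length_nonneg)

lemma covered_iff_adjacent:
  "covered s E p q \<longleftrightarrow>
   (\<exists>a b. adjacent E a b \<and> dist p a \<le> dist a b / (2 * s + 2) \<and> dist q b \<le> dist a b / (2 * s + 2))"
  (is "_ \<longleftrightarrow> (\<exists>a b. ?edge a b)")
proof
  assume "covered s E p q"
  then obtain a b where "(a, b) \<in> E" "?edge a b \<or> ?edge b a"
    unfolding covered_def adjacent_def by (force simp: dist_commute)
  then show "\<exists>a b. ?edge a b" by blast
next
  assume "\<exists>a b. ?edge a b"
  then show "covered s E p q"
    unfolding covered_def adjacent_def by (force simp: dist_commute)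
qed

lemma covered_mono: "covered s E p q \<Longrightarrow> E \<subseteq> F \<Longrightarrow> covered s F p q"
  unfolding covered_def by blast

lemma covered_insert_self: "s > -1 \<Longrightarrow> covered s (insert (p, q) E) p q"
  unfolding covered_def by (rule bexI[of _ "(p, q)"]) auto

lemma process_pair_bounds: "E \<subseteq> process_pair s E pq" "process_pair s E pq \<subseteq> insert pq E"
  by (auto simp: process_pair_def)

lemma foldl_process_pair_increasing: "E \<subseteq> foldl (process_pair s) E L"
proof (induction L arbitrary: E)
  case (Cons pq L)
  then show ?case using process_pair_bounds(1)[of E s pq] by force
qed simp

lemma foldl_process_pair_subset: "foldl (process_pair s) E L \<subseteq> E \<union> set L"
proof (induction L arbitrary: E)
  case (Cons pq L)
  then show ?case using process_pair_bounds(2)[of s E pq] by fastforce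
qed simp

lemma foldl_process_pair_covers:
  assumes "s > -1" and "(p, q) \<in> set L"
  shows "covered s (foldl (process_pair s) E L) p q"
  using assms(2)
proof (induction L arbitrary: E)
  case (Cons pq L)
  show ?case
  proof (cases "pq = (p, q)")
    case True
    have "covered s (process_pair s E pq) p q"
      using True covered_insert_self[OF assms(1)] by (auto simp: process_pair_def)
    then show ?thesis
      using covered_mono[OF _ foldl_process_pair_increasing] by simp
  next
    case False
    then show ?thesis using Cons.IH Cons.prems by simp
  qed
qed simp

lemma uncoord_graph_subset: "uncoord_graph s L \<subseteq> set L"
  using foldl_process_pair_subset[of s "{}" L] by (simp add: uncoord_graph_def)

lemma uncoord_graph_covers: "s > -1 \<Longrightarrow> (p, q) \<in> set L \<Longrightarrow> covered s (uncoord_graph s L) p q"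
  unfolding uncoord_graph_def by (rule foldl_process_pair_covers)

lemma finite_measure_induct:
  fixes f :: "'a \<Rightarrow> 'b::linorder"
  assumes "finite A" and "x \<in> A"
    and step: "\<And>x. x \<in> A \<Longrightarrow> (\<And>y. y \<in> A \<Longrightarrow> f y < f x \<Longrightarrow> Q y) \<Longrightarrow> Q x"
  shows "Q x"
proof -
  define below where "below x = {y \<in> A. f y < f x}" for x
  have "Q x" if "x \<in> A" "card (below x) = n" for n x
    using that
  proof (induction n arbitrary: x rule: less_induct)
    case (less n)
    show ?case
    proof (rule step[OF \<open>x \<in> A\<close>])
      fix y assume "y \<in> A" "f y < f x"
      then have "below y \<subset> below x" by (auto simp: below_def)
      then have "card (below y) < n"
        using less.prems \<open>finite A\<close> by (auto intro: psubset_card_mono simp: below_def)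
      then show "Q y" using less.IH \<open>y \<in> A\<close> by blast
    qed
  qed
  then show ?thesis using assms(2) by blast
qed

lemma covering_edge_estimate:
  fixes x y c D s :: real
  assumes "s > 1" and "D > 0"
    and x: "0 \<le> x" "x \<le> c / (2 * s + 2)" and y: "0 \<le> y" "y \<le> c / (2 * s + 2)"
    and triangle: "c \<le> x + D + y"
  defines "t \<equiv> (s + 1) / (s - 1)"
  shows "x < D" and "y < D" and "t * x + c + t * y \<le> t * D"
proof -
  have "x * (2 * s + 2) \<le> c" "y * (2 * s + 2) \<le> c"
    using x(2) y(2) \<open>s > 1\<close> by (simp_all add: pos_le_divide_eq)
  then have "(x + y) * (s + 1) \<le> c"
    by (simp add: algebra_simps)
  moreover have "c * (s + 1) \<le> (x + D + y) * (s + 1)"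
    using triangle \<open>s > 1\<close> by (intro mult_right_mono) auto
  ultimately have cD: "c * s \<le> D * (s + 1)"
    by (simp add: algebra_simps)
  have below_D: "z < D" if "0 \<le> z" "z * (2 * s + 2) \<le> c" for z
  proof -
    have "(2 * s * z) * (s + 1) = (z * (2 * s + 2)) * s"
      by (simp add: algebra_simps)
    also have "\<dots> \<le> c * s"
      using that \<open>s > 1\<close> by (intro mult_right_mono) auto
    also have "\<dots> \<le> D * (s + 1)"
      by (fact cD)
    finally have "2 * s * z \<le> D"
      using \<open>s > 1\<close> by (simp add: mult_le_cancel_right)
    moreover have "2 * z \<le> 2 * s * z"
      using that \<open>s > 1\<close> by (intro mult_right_mono) auto
    ultimately show "z < D"
      using that \<open>D > 0\<close> by linarith
  qed
  show "x < D" "y < D"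
    using below_D x(1) y(1) \<open>x * (2 * s + 2) \<le> c\<close> \<open>y * (2 * s + 2) \<le> c\<close> by auto
  have t: "t * (s - 1) = s + 1"
    using \<open>s > 1\<close> by (simp add: t_def)
  have "(t * x + c + t * y) * (s - 1) = (x + y) * (t * (s - 1)) + c * (s - 1)"
    by (simp add: algebra_simps)
  also have "\<dots> \<le> c + c * (s - 1)"
    using \<open>(x + y) * (s + 1) \<le> c\<close> t by simp
  also have "\<dots> \<le> D * (s + 1)"
    using cD by (simp add: algebra_simps)
  also have "\<dots> = (t * D) * (s - 1)"
    using t by (simp add: algebra_simps)
  finally show "t * x + c + t * y \<le> t * D"
    using \<open>s > 1\<close> by (simp add: mult_le_cancel_right)
qed

lemma covering_graph_short_paths:
  fixes E :: "('a::euclidean_space \<times> 'a) set"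
  assumes "finite P" and "s > 1" and "E \<subseteq> P \<times> P"
    and covers: "\<And>p q. p \<in> P \<Longrightarrow> q \<in> P \<Longrightarrow> p \<noteq> q \<Longrightarrow> covered s E p q"
    and "p \<in> P" and "q \<in> P"
  shows "\<exists>xs. is_path E xs p q \<and> path_length xs \<le> (s + 1) / (s - 1) * dist p q"
proof -
  define t where "t = (s + 1) / (s - 1)"
  have "\<exists>xs. is_path E xs (fst pq) (snd pq) \<and> path_length xs \<le> t * dist (fst pq) (snd pq)"
    if "pq \<in> P \<times> P" for pq
  proof (rule finite_measure_induct[where f = "case_prod dist", OF _ that])
    show "finite (P \<times> P)" using \<open>finite P\<close> by simp
  next
    fix pq assume "pq \<in> P \<times> P"
      and IH: "\<And>pq'. pq' \<in> P \<times> P \<Longrightarrow> case_prod dist pq' < case_prod dist pq \<Longrightarrow>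
        \<exists>xs. is_path E xs (fst pq') (snd pq') \<and> path_length xs \<le> t * dist (fst pq') (snd pq')"
    obtain p q where pq: "pq = (p, q)" "p \<in> P" "q \<in> P" using \<open>pq \<in> P \<times> P\<close> by auto
    show "\<exists>xs. is_path E xs (fst pq) (snd pq) \<and> path_length xs \<le> t * dist (fst pq) (snd pq)"
    proof (cases "p = q")
      case True
      then show ?thesis using pq by (intro exI[of _ "[p]"]) simp
    next
      case False
      then obtain a b where ab: "adjacent E a b"
        and pa: "dist p a \<le> dist a b / (2 * s + 2)" and qb: "dist b q \<le> dist a b / (2 * s + 2)"
        using covers[OF pq(2,3)] by (auto simp: covered_iff_adjacent dist_commute)
      have "a \<in> P" "b \<in> P" using ab \<open>E \<subseteq> P \<times> P\<close> by (auto simp: adjacent_def)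
      have "dist a b \<le> dist p a + dist p q + dist b q"
        using dist_triangle[of a b p] dist_triangle[of p b q] by (simp add: dist_commute)
      note estimate = covering_edge_estimate[OF \<open>s > 1\<close> _ zero_le_dist pa zero_le_dist qb this]
      have "dist p q > 0" using False by simp
      obtain xs where xs: "is_path E xs p a" "path_length xs \<le> t * dist p a"
        using IH[of "(p, a)"] estimate(1) \<open>dist p q > 0\<close> pq \<open>a \<in> P\<close> by auto
      obtain ys where ys: "is_path E ys b q" "path_length ys \<le> t * dist b q"
        using IH[of "(b, q)"] estimate(2) \<open>dist p q > 0\<close> pq \<open>b \<in> P\<close> by auto
      have "last xs = a" "hd ys = b" "xs \<noteq> []" "ys \<noteq> []"
        using xs(1) ys(1) by (auto simp: is_path_def)
      then have "path_length (xs @ ys) = path_length xs + dist a b + path_length ys"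
        by (simp add: path_length_append)
      also have "\<dots> \<le> t * dist p q"
        using xs(2) ys(2) estimate(3) \<open>dist p q > 0\<close> by (simp add: t_def)
      finally show ?thesis
        using is_path_append_edge[OF xs(1) ab ys(1)] pq by auto
    qed
  qed
  from this[of "(p, q)"] show ?thesis using \<open>p \<in> P\<close> \<open>q \<in> P\<close> by (simp add: t_def)
qed

theorem theorem5:
  fixes P :: "'a::euclidean_space set" and s :: real and ord_list :: "('a \<times> 'a) list"
  assumes "finite P" and "card P \<ge> 2" and "s > 1"
    and "distinct ord_list"
    and "set ord_list = {(p, q). p \<in> P \<and> q \<in> P \<and> p \<noteq> q}"
  shows "\<forall>p\<in>P. \<forall>q\<in>P. (\<exists>xs. is_path (uncoord_graph s ord_list) xs p q) \<and>
           graph_dist (uncoord_graph s ord_list) p q \<le> (s + 1) / (s - 1) * dist p q"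
proof (intro ballI)
  fix p q assume "p \<in> P" "q \<in> P"
  let ?E = "uncoord_graph s ord_list"
  have "?E \<subseteq> P \<times> P"
    using uncoord_graph_subset[of s ord_list] assms(5) by auto
  moreover have "covered s ?E x y" if "x \<in> P" "y \<in> P" "x \<noteq> y" for x y
    using uncoord_graph_covers[of s x y ord_list] \<open>s > 1\<close> assms(5) that by simp
  ultimately obtain xs where "is_path ?E xs p q" "path_length xs \<le> (s + 1) / (s - 1) * dist p q"
    using covering_graph_short_paths[OF \<open>finite P\<close> \<open>s > 1\<close> _ _ \<open>p \<in> P\<close> \<open>q \<in> P\<close>] by blast
  then show "(\<exists>xs. is_path ?E xs p q) \<and> graph_dist ?E p q \<le> (s + 1) / (s - 1) * dist p q"
    using graph_dist_le_path_length[of ?E xs p q] by auto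
qed

end
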